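(* Let $c>0$, $k>0$, and $\beta\in(0,1)$, and put $v=\beta c$ and $\gamma=(1-\beta^2)^{-1/2}$. Let $r:[0,\pi]\to(0,\infty)$ be the radial function of an axially symmetric cavity boundary, where the boundary is the surface of revolution $\{\,r(\theta)\,\hat{\mathbf n}\;:\;\hat{\mathbf n}\in S^2,\ \hat{\mathbf n}\cdot\hat{\mathbf x}=\cos\theta\,\}$ about the $x$-axis, with $\hat{\mathbf x}$ the unit vector along the $x$-axis. For each $\theta\in[0,\pi]$ let $\Delta t_{\mathrm{out}}(\theta)$ be the positive root $t$ of $$(c^2-v^2)\,t^2-2\,r(\theta)\,v\cos\theta\;t-r(\theta)^2=0,$$ let $\Delta t_{\mathrm{ret}}(\theta)$ be the positive root $t$ of $$(c^2-v^2)\,t^2+2\,r(\theta)\,v\cos\theta\;t-r(\theta)^2=0,$$ and define the round-trip phase $\Phi(\theta)=c\,k\,\bigl(\Delta t_{\mathrm{out}}(\theta)+\Delta t_{\mathrm{ret}}(\theta)\bigr)$. Assume $\Phi(\theta)$ is independent of $\theta\in[0,\pi]$. Then, with $a_\perp:=r(\pi/2)$, $$r(\theta)=\frac{a_\perp\sqrt{1-\beta^2}}{\sqrt{1-\beta^2\sin^2\theta}}\qquad\text{for all }\theta\in[0,\pi].$$ Equivalently, the boundary is the ellipsoid of revolution $$\frac{x^2}{(a_\perp/\gamma)^2}+\frac{y^2+z^2}{a_\perp^2}=1,$$ whose longitudinal semiaxis is $a_\parallel:=r(0)=a_\perp/\gamma$; in particular $$\frac{a_\parallel}{a_\perp}=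\frac1\gamma=\sqrt{1-\beta^2}.$$
   Context: Physical setting: a medium at rest supports nondispersive waves ($\omega=ck$) propagating isotropically at speed $c$ in the medium's rest frame. A cavity moves uniformly through the medium with velocity $v\hat{\mathbf x}$, $v=\beta c$. The boundary is described in the medium frame by the distance $r(\theta)$ from the cavity center to the boundary along a direction making angle $\theta$ with the direction of motion $\hat{\mathbf x}$. $\Delta t_{\mathrm{out}}(\theta)$ is the travel time of a wave emitted from the moving center to reach the co-moving boundary point in direction $\theta$ (wavefront distance $c\,\Delta t$ equals the distance to the translated boundary point), and $\Delta t_{\mathrm{ret}}(\theta)$ is the travel time for the return from that boundary point to the moving center; the defining quadratics above encode exactly these pursuit conditions. The requirement that $\Phi$ be independent of $\theta$ is called spherical-harmonic phase closure. *)

theory Defs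
  imports "HOL-Analysis.Analysis"
begin

text \<open>The positive root t of the quadratic A t^2 + B t + C = 0 (unique under the
  paper's hypotheses, since A > 0 and C < 0).\<close>
definition pos_root :: "real \<Rightarrow> real \<Rightarrow> real \<Rightarrow> real" where
  "pos_root A B C = (THE t. t > 0 \<and> A * t^2 + B * t + C = 0)"

definition dt_out :: "real \<Rightarrow> real \<Rightarrow> (real \<Rightarrow> real) \<Rightarrow> real \<Rightarrow> real" where
  "dt_out c v r \<theta> = pos_root (c^2 - v^2) (- 2 * r \<theta> * v * cos \<theta>) (- ((r \<theta>) ^ 2))"

definition dt_ret :: "real \<Rightarrow> real \<Rightarrow> (real \<Rightarrow> real) \<Rightarrow> real \<Rightarrow> real" where
  "dt_ret c v r \<theta> = pos_root (c^2 - v^2) (2 * r \<theta> * v * cos \<theta>) (- ((r \<theta>) ^ 2))"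

definition round_trip_phase :: "real \<Rightarrow> real \<Rightarrow> real \<Rightarrow> (real \<Rightarrow> real) \<Rightarrow> real \<Rightarrow> real" where
  "round_trip_phase c k v r \<theta> = c * k * (dt_out c v r \<theta> + dt_ret c v r \<theta>)"

definition cavity_boundary :: "(real \<Rightarrow> real) \<Rightarrow> (real \<times> real \<times> real) set" where
  "cavity_boundary r = {(r \<theta> * cos \<theta>, r \<theta> * sin \<theta> * cos \<phi>, r \<theta> * sin \<theta> * sin \<phi>) | \<theta> \<phi>.
      \<theta> \<in> {0..pi}}"

end

(* The outbound and return travel times are the positive roots of two quadratics that differ
   only in the sign of the linear coefficient, so their sum is the square root of the common
   discriminant divided by c^2 - v^2; this gives
   \<Phi>(\<theta>) = 2 k r(\<theta>) sqrt (1 - \<beta>^2 sin^2 \<theta>) / (1 - \<beta>^2).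
   Phase closure thus makes r(\<theta>) sqrt (1 - \<beta>^2 sin^2 \<theta>) constant, equal to its value
   a sqrt (1 - \<beta>^2) at \<theta> = pi/2. Since 1 - \<beta>^2 sin^2 \<theta> = cos^2 \<theta> + (1 - \<beta>^2) sin^2 \<theta>,
   this is the polar equation r^2 (cos^2 \<theta> / a_par^2 + sin^2 \<theta> / a^2) = 1 of the spheroid
   with semiaxis a_par = a sqrt (1 - \<beta>^2) along the x-axis and a across it. *)

theory Submission
  imports Defs "HOL-Library.Quadratic_Discriminant"
begin

lemma pos_root_eq:
  fixes A B C :: real
  assumes "A > 0" "C < 0"
  shows "pos_root A B C = (- B + sqrt (discrim A B C)) / (2 * A)"
proof -
  have discrim_gt: "B\<^sup>2 < discrim A B C"
    using assms by (simp add: discrim_def mult_pos_neg)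
  then have "0 \<le> discrim A B C"
    using zero_le_power2[of B] by linarith
  from discrim_gt have sqrt_gt: "\<bar>B\<bar> < sqrt (discrim A B C)"
    by (metis real_sqrt_abs real_sqrt_less_iff)
  have roots: "A * t\<^sup>2 + B * t + C = 0 \<longleftrightarrow>
      t = (- B + sqrt (discrim A B C)) / (2 * A) \<or> t = (- B - sqrt (discrim A B C)) / (2 * A)" for t
    using assms \<open>0 \<le> discrim A B C\<close> by (intro discriminant_nonneg) auto
  have "(- B - sqrt (discrim A B C)) / (2 * A) < 0" "0 < (- B + sqrt (discrim A B C)) / (2 * A)"
    using assms sqrt_gt by (auto intro: divide_neg_pos divide_pos_pos)
  then show ?thesis
    unfolding pos_root_def using roots by (intro the_equality) (blast, smt (verit))
qed

lemma pos_root_add_pos_root_neg: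
  fixes A B C :: real
  assumes "A > 0" "C < 0"
  shows "pos_root A B C + pos_root A (- B) C = sqrt (discrim A B C) / A"
proof -
  have "discrim A (- B) C = discrim A B C"
    by (simp add: discrim_def)
  then show ?thesis
    using assms by (simp add: pos_root_eq field_simps)
qed

lemma round_trip_phase_eq:
  fixes c k \<beta> \<theta> :: real and r :: "real \<Rightarrow> real"
  assumes "c > 0" "\<beta>\<^sup>2 < 1" "r \<theta> > 0"
  shows "round_trip_phase c k (\<beta> * c) r \<theta>
    = 2 * k * r \<theta> * sqrt (1 - \<beta>\<^sup>2 * (sin \<theta>)\<^sup>2) / (1 - \<beta>\<^sup>2)"
proof -
  define A where "A = c\<^sup>2 - (\<beta> * c)\<^sup>2"
  define B where "B = 2 * r \<theta> * (\<beta> * c) * cos \<theta>"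
  define C where "C = - (r \<theta>)\<^sup>2"
  have A_eq: "A = c\<^sup>2 * (1 - \<beta>\<^sup>2)"
    by (simp add: A_def algebra_simps power_mult_distrib)
  have "A > 0" "C < 0"
    using assms by (simp_all add: A_eq C_def)
  have "discrim A B C = (2 * r \<theta> * c)\<^sup>2 * (1 - \<beta>\<^sup>2 * (sin \<theta>)\<^sup>2)"
    unfolding discrim_def A_eq B_def C_def
    by (simp add: power_mult_distrib cos_squared_eq algebra_simps)
  then have sqrt_discrim: "sqrt (discrim A B C) = 2 * r \<theta> * c * sqrt (1 - \<beta>\<^sup>2 * (sin \<theta>)\<^sup>2)"
    using assms by (simp add: real_sqrt_mult)
  have "dt_out c (\<beta> * c) r \<theta> + dt_ret c (\<beta> * c) r \<theta> = pos_root A B C + pos_root A (- B) C"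
    unfolding dt_out_def dt_ret_def A_def B_def C_def by simp
  also have "\<dots> = sqrt (discrim A B C) / A"
    using \<open>A > 0\<close> \<open>C < 0\<close> by (rule pos_root_add_pos_root_neg)
  also have "\<dots> = 2 * r \<theta> * sqrt (1 - \<beta>\<^sup>2 * (sin \<theta>)\<^sup>2) / (c * (1 - \<beta>\<^sup>2))"
    using assms unfolding sqrt_discrim unfolding A_eq by (simp add: power2_eq_square)
  finally show ?thesis
    using assms unfolding round_trip_phase_def by simp
qed

lemma phase_closure_radial_law:
  fixes c k \<beta> \<theta> :: real and r :: "real \<Rightarrow> real"
  assumes "c > 0" "k \<noteq> 0" "\<beta>\<^sup>2 < 1"
    and hr: "\<And>\<theta>. \<theta> \<in> {0..pi} \<Longrightarrow> r \<theta> > 0"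
    and hconst: "\<And>\<theta> \<theta>'. \<theta> \<in> {0..pi} \<Longrightarrow> \<theta>' \<in> {0..pi} \<Longrightarrow>
        round_trip_phase c k (\<beta> * c) r \<theta> = round_trip_phase c k (\<beta> * c) r \<theta>'"
    and "\<theta> \<in> {0..pi}"
  shows "r \<theta> * sqrt (1 - \<beta>\<^sup>2 * (sin \<theta>)\<^sup>2) = r (pi/2) * sqrt (1 - \<beta>\<^sup>2)"
proof -
  have "pi/2 \<in> {0..pi}"
    by simp
  have "1 - \<beta>\<^sup>2 \<noteq> 0"
    using assms(3) by simp
  have "2 * k * r \<theta> * sqrt (1 - \<beta>\<^sup>2 * (sin \<theta>)\<^sup>2) / (1 - \<beta>\<^sup>2)
      = 2 * k * r (pi/2) * sqrt (1 - \<beta>\<^sup>2 * (sin (pi/2))\<^sup>2) / (1 - \<beta>\<^sup>2)"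
    using hconst[OF \<open>\<theta> \<in> {0..pi}\<close> \<open>pi/2 \<in> {0..pi}\<close>]
    unfolding round_trip_phase_eq[where r=r, OF assms(1,3) hr[OF \<open>\<theta> \<in> {0..pi}\<close>]]
      round_trip_phase_eq[where r=r, OF assms(1,3) hr[OF \<open>pi/2 \<in> {0..pi}\<close>]] .
  then show ?thesis
    using \<open>k \<noteq> 0\<close> \<open>1 - \<beta>\<^sup>2 \<noteq> 0\<close> by simp
qed

lemma one_minus_mult_sin_squared_pos:
  fixes \<beta> \<theta> :: real
  assumes "\<beta>\<^sup>2 < 1"
  shows "0 < 1 - \<beta>\<^sup>2 * (sin \<theta>)\<^sup>2"
proof -
  have "\<beta>\<^sup>2 * (sin \<theta>)\<^sup>2 \<le> \<beta>\<^sup>2"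
    by (simp add: mult_left_le abs_square_le_1)
  then show ?thesis
    using assms by linarith
qed

lemma spheroid_polar_eq_of_radial_law:
  fixes \<rho> a \<beta> \<theta> :: real
  assumes "a \<noteq> 0" "\<beta>\<^sup>2 < 1"
    and "\<rho> * sqrt (1 - \<beta>\<^sup>2 * (sin \<theta>)\<^sup>2) = a * sqrt (1 - \<beta>\<^sup>2)"
  shows "\<rho>\<^sup>2 * ((cos \<theta> / (a * sqrt (1 - \<beta>\<^sup>2)))\<^sup>2 + (sin \<theta> / a)\<^sup>2) = 1"
proof -
  have "\<rho>\<^sup>2 * (1 - \<beta>\<^sup>2 * (sin \<theta>)\<^sup>2) = a\<^sup>2 * (1 - \<beta>\<^sup>2)"
    using arg_cong[OF assms(3), of "\<lambda>t. t\<^sup>2"] assms(2)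
      less_imp_le[OF one_minus_mult_sin_squared_pos[OF assms(2)]]
    by (simp add: power_mult_distrib)
  moreover have "(cos \<theta> / (a * sqrt (1 - \<beta>\<^sup>2)))\<^sup>2 + (sin \<theta> / a)\<^sup>2
      = (1 - \<beta>\<^sup>2 * (sin \<theta>)\<^sup>2) / (a\<^sup>2 * (1 - \<beta>\<^sup>2))"
    using assms(1,2) by (simp add: power_divide power_mult_distrib cos_squared_eq field_simps)
  ultimately show ?thesis
    using assms(1,2) by simp
qed

lemma polar_coordinates:
  fixes u w :: real
  shows "u = sqrt (u\<^sup>2 + w\<^sup>2) * cos (Arg (Complex u w)) \<and> w = sqrt (u\<^sup>2 + w\<^sup>2) * sin (Arg (Complex u w))"
  using arg_cong[OF rcis_cmod_Arg[of "Complex u w"], of Re]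
    arg_cong[OF rcis_cmod_Arg[of "Complex u w"], of Im]
  by (simp add: norm_complex_def)

lemma spherical_coordinates:
  fixes x y z :: real
  obtains \<theta> \<phi> where "\<theta> \<in> {0..pi}"
    and "(x, y, z) = (sqrt (x\<^sup>2 + y\<^sup>2 + z\<^sup>2) * cos \<theta>,
        sqrt (x\<^sup>2 + y\<^sup>2 + z\<^sup>2) * sin \<theta> * cos \<phi>, sqrt (x\<^sup>2 + y\<^sup>2 + z\<^sup>2) * sin \<theta> * sin \<phi>)"
proof
  define \<rho> where "\<rho> = sqrt (x\<^sup>2 + y\<^sup>2 + z\<^sup>2)"
  define w where "w = sqrt (y\<^sup>2 + z\<^sup>2)"
  define \<theta> where "\<theta> = Arg (Complex x w)"
  define \<phi> where "\<phi> = Arg (Complex y z)"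
  have "x = \<rho> * cos \<theta>" "w = \<rho> * sin \<theta>"
    using polar_coordinates[of x w] unfolding \<theta>_def \<rho>_def by (simp_all add: w_def add.assoc)
  moreover have "y = w * cos \<phi>" "z = w * sin \<phi>"
    using polar_coordinates[of y z] unfolding \<phi>_def w_def by simp_all
  ultimately have "(x, y, z) = (\<rho> * cos \<theta>, \<rho> * sin \<theta> * cos \<phi>, \<rho> * sin \<theta> * sin \<phi>)"
    by simp
  then show "(x, y, z) = (sqrt (x\<^sup>2 + y\<^sup>2 + z\<^sup>2) * cos \<theta>,
      sqrt (x\<^sup>2 + y\<^sup>2 + z\<^sup>2) * sin \<theta> * cos \<phi>, sqrt (x\<^sup>2 + y\<^sup>2 + z\<^sup>2) * sin \<theta> * sin \<phi>)"
    unfolding \<rho>_def .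
  show "\<theta> \<in> {0..pi}"
    using Arg_bounded[of "Complex x w"] Arg_less_0[of "Complex x w"] by (simp add: \<theta>_def w_def)
qed

lemma spheroid_equation_spherical:
  fixes \<rho> \<theta> \<phi> a b :: real
  shows "(\<rho> * cos \<theta>)\<^sup>2 / a\<^sup>2 + ((\<rho> * sin \<theta> * cos \<phi>)\<^sup>2 + (\<rho> * sin \<theta> * sin \<phi>)\<^sup>2) / b\<^sup>2
    = \<rho>\<^sup>2 * ((cos \<theta> / a)\<^sup>2 + (sin \<theta> / b)\<^sup>2)"
proof -
  have "(\<rho> * sin \<theta> * cos \<phi>)\<^sup>2 + (\<rho> * sin \<theta> * sin \<phi>)\<^sup>2 = (\<rho> * sin \<theta>)\<^sup>2"
    by (simp add: power_mult_distrib flip: distrib_left)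
  then show ?thesis
    by (simp add: power_mult_distrib power_divide distrib_left)
qed

lemma cavity_boundary_eq_spheroid:
  fixes r :: "real \<Rightarrow> real" and a b :: real
  assumes nonneg: "\<And>\<theta>. \<theta> \<in> {0..pi} \<Longrightarrow> r \<theta> \<ge> 0"
    and polar_eq: "\<And>\<theta>. \<theta> \<in> {0..pi} \<Longrightarrow> (r \<theta>)\<^sup>2 * ((cos \<theta> / a)\<^sup>2 + (sin \<theta> / b)\<^sup>2) = 1"
  shows "cavity_boundary r = {(x, y, z). x\<^sup>2 / a\<^sup>2 + (y\<^sup>2 + z\<^sup>2) / b\<^sup>2 = 1}"
proof (intro set_eqI iffI)
  fix p assume "p \<in> cavity_boundary r"
  then obtain \<theta> \<phi> where "\<theta> \<in> {0..pi}"
    and "p = (r \<theta> * cos \<theta>, r \<theta> * sin \<theta> * cos \<phi>, r \<theta> * sin \<theta> * sin \<phi>)"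
    unfolding cavity_boundary_def by blast
  then show "p \<in> {(x, y, z). x\<^sup>2 / a\<^sup>2 + (y\<^sup>2 + z\<^sup>2) / b\<^sup>2 = 1}"
    using polar_eq by (simp add: spheroid_equation_spherical)
next
  fix p assume "p \<in> {(x, y, z). x\<^sup>2 / a\<^sup>2 + (y\<^sup>2 + z\<^sup>2) / b\<^sup>2 = 1}"
  then obtain x y z where p: "p = (x, y, z)" and on_spheroid: "x\<^sup>2 / a\<^sup>2 + (y\<^sup>2 + z\<^sup>2) / b\<^sup>2 = 1"
    by auto
  define \<rho> where "\<rho> = sqrt (x\<^sup>2 + y\<^sup>2 + z\<^sup>2)"
  obtain \<theta> \<phi> where \<theta>: "\<theta> \<in> {0..pi}"
    and xyz: "(x, y, z) = (\<rho> * cos \<theta>, \<rho> * sin \<theta> * cos \<phi>, \<rho> * sin \<theta> * sin \<phi>)"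
    unfolding \<rho>_def by (rule spherical_coordinates)
  have "\<rho>\<^sup>2 * ((cos \<theta> / a)\<^sup>2 + (sin \<theta> / b)\<^sup>2) = (r \<theta>)\<^sup>2 * ((cos \<theta> / a)\<^sup>2 + (sin \<theta> / b)\<^sup>2)"
    using on_spheroid xyz polar_eq[OF \<theta>] by (simp add: spheroid_equation_spherical)
  moreover have "(cos \<theta> / a)\<^sup>2 + (sin \<theta> / b)\<^sup>2 \<noteq> 0"
    using polar_eq[OF \<theta>] by fastforce
  ultimately have "\<rho>\<^sup>2 = (r \<theta>)\<^sup>2"
    by (metis mult_cancel_right)
  then have "\<rho> = r \<theta>"
    using nonneg[OF \<theta>] by (simp add: \<rho>_def)
  then show "p \<in> cavity_boundary r"
    using p xyz \<theta> unfolding cavity_boundary_def by blast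
qed

theorem theorem1:
  fixes c k \<beta> :: real and r :: "real \<Rightarrow> real"
  assumes hc: "c > 0" and hk: "k > 0" and h\<beta>: "0 < \<beta>" "\<beta> < 1"
    and hr: "\<And>\<theta>. \<theta> \<in> {0..pi} \<Longrightarrow> r \<theta> > 0"
    and hconst: "\<And>\<theta> \<theta>'. \<theta> \<in> {0..pi} \<Longrightarrow> \<theta>' \<in> {0..pi} \<Longrightarrow>
        round_trip_phase c k (\<beta> * c) r \<theta> = round_trip_phase c k (\<beta> * c) r \<theta>'"
  shows "(\<forall>\<theta>\<in>{0..pi}. r \<theta> = r (pi/2) * sqrt (1 - \<beta>^2) / sqrt (1 - \<beta>^2 * (sin \<theta>)^2))
    \<and> cavity_boundary r = {(x, y, z). x^2 / (r (pi/2) * sqrt (1 - \<beta>^2))^2 + (y^2 + z^2) / (r (pi/2))^2 = 1}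
    \<and> r 0 = r (pi/2) / (1 / sqrt (1 - \<beta>^2))
    \<and> r 0 / r (pi/2) = sqrt (1 - \<beta>^2)"
proof -
  have \<beta>_sq: "\<beta>\<^sup>2 < 1"
    using h\<beta> by (simp add: power_less_one_iff)
  have "r (pi/2) > 0"
    using hr by simp
  have radial_law: "r \<theta> * sqrt (1 - \<beta>\<^sup>2 * (sin \<theta>)\<^sup>2) = r (pi/2) * sqrt (1 - \<beta>\<^sup>2)"
    if "\<theta> \<in> {0..pi}" for \<theta>
    using hk by (intro phase_closure_radial_law[OF hc _ \<beta>_sq hr hconst that]) simp
  have polar_form: "\<forall>\<theta>\<in>{0..pi}. r \<theta> = r (pi/2) * sqrt (1 - \<beta>\<^sup>2) / sqrt (1 - \<beta>\<^sup>2 * (sin \<theta>)\<^sup>2)"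
  proof
    fix \<theta> :: real assume "\<theta> \<in> {0..pi}"
    have "sqrt (1 - \<beta>\<^sup>2 * (sin \<theta>)\<^sup>2) > 0"
      using one_minus_mult_sin_squared_pos[OF \<beta>_sq] by simp
    then show "r \<theta> = r (pi/2) * sqrt (1 - \<beta>\<^sup>2) / sqrt (1 - \<beta>\<^sup>2 * (sin \<theta>)\<^sup>2)"
      using radial_law[OF \<open>\<theta> \<in> {0..pi}\<close>] by (simp add: eq_divide_eq)
  qed
  have boundary: "cavity_boundary r
      = {(x, y, z). x\<^sup>2 / (r (pi/2) * sqrt (1 - \<beta>\<^sup>2))\<^sup>2 + (y\<^sup>2 + z\<^sup>2) / (r (pi/2))\<^sup>2 = 1}"
  proof (rule cavity_boundary_eq_spheroid)
    fix \<theta> :: real assume \<theta>: "\<theta> \<in> {0..pi}"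
    show "0 \<le> r \<theta>"
      using hr[OF \<theta>] by simp
    show "(r \<theta>)\<^sup>2 * ((cos \<theta> / (r (pi/2) * sqrt (1 - \<beta>\<^sup>2)))\<^sup>2 + (sin \<theta> / r (pi/2))\<^sup>2) = 1"
      using \<open>r (pi/2) > 0\<close> \<beta>_sq radial_law[OF \<theta>] by (intro spheroid_polar_eq_of_radial_law) auto
  qed
  have "r 0 = r (pi/2) * sqrt (1 - \<beta>\<^sup>2)"
    using radial_law[of 0] by simp
  then show ?thesis
    using \<open>r (pi/2) > 0\<close> by (intro conjI polar_form boundary) simp_all
qed

end
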